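(* Every skewly representable function $f:\mathbb{N}^k\to\mathbb{N}$ with finite range is strictly representable.
   Context: We work in the simply typed $\lambda$-calculus (type assignment to untyped $\lambda$-terms) with a single base type $o$, with $\beta\eta$-conversion as equality. For a type $\tau$, $\omega_\tau=(\tau\to\tau)\to\tau\to\tau$. The Church numeral of $n$ is $\rho(n)=\lambda f x.f^{n}x$; every type assignable to all Church numerals is of the form $\omega_\tau$. A function $f:\mathbb{N}^k\to\mathbb{N}$ is skewly representable if there exist a term $E$ and types $\alpha_1,\dots,\alpha_k,\beta$ (each a type of Church numerals) with $\vdash E:\alpha_1\to\cdots\to\alpha_k\to\beta$ such that $E\,\rho(n_1)\cdots\rho(n_k)=_{\beta\eta}\rho(f(n_1,\dots,n_k))$ for all $n_1,\dots,n_k$, where $\rho(n_i)$ is typed with $\alpha_i$. It is strictly representable if this holds with $\alpha_1=\cdots=\alpha_k=\beta=\omega_\tau$ for some type $\tau$. *)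

theory Defs
  imports Main
begin

datatype ty = O | Arr ty ty

datatype tm = Var nat | App tm tm | Abs tm

fun lift :: "tm \<Rightarrow> nat \<Rightarrow> tm" where
  "lift (Var i) k = (if i < k then Var i else Var (Suc i))"
| "lift (App s t) k = App (lift s k) (lift t k)"
| "lift (Abs s) k = Abs (lift s (Suc k))"

fun subst :: "tm \<Rightarrow> tm \<Rightarrow> nat \<Rightarrow> tm" where
  "subst (Var i) t k = (if k < i then Var (i - 1) else if i = k then t else Var i)"
| "subst (App s u) t k = App (subst s t k) (subst u t k)"
| "subst (Abs s) t k = Abs (subst s (lift t 0) (Suc k))"

inductive bestep :: "tm \<Rightarrow> tm \<Rightarrow> bool" where
  beta: "bestep (App (Abs s) t) (subst s t 0)"
| eta: "bestep (Abs (App (lift s 0) (Var 0))) s"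
| appL: "bestep s s' \<Longrightarrow> bestep (App s t) (App s' t)"
| appR: "bestep t t' \<Longrightarrow> bestep (App s t) (App s t')"
| abs: "bestep s s' \<Longrightarrow> bestep (Abs s) (Abs s')"

definition beq :: "tm \<Rightarrow> tm \<Rightarrow> bool" where
  "beq = equivclp bestep"

inductive typing :: "ty list \<Rightarrow> tm \<Rightarrow> ty \<Rightarrow> bool" where
  tvar: "i < length \<Gamma> \<Longrightarrow> typing \<Gamma> (Var i) (\<Gamma> ! i)"
| tapp: "typing \<Gamma> s (Arr T U) \<Longrightarrow> typing \<Gamma> t T \<Longrightarrow> typing \<Gamma> (App s t) U"
| tabs: "typing (T # \<Gamma>) s U \<Longrightarrow> typing \<Gamma> (Abs s) (Arr T U)"

definition omega :: "ty \<Rightarrow> ty" where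
  "omega \<tau> = Arr (Arr \<tau> \<tau>) (Arr \<tau> \<tau>)"

text \<open>Church numeral rho n = \<lambda>f x. f^n x  (f = Var 1, x = Var 0 under two binders).\<close>
definition church :: "nat \<Rightarrow> tm" where
  "church n = Abs (Abs ((App (Var 1) ^^ n) (Var 0)))"

definition apps :: "tm \<Rightarrow> tm list \<Rightarrow> tm" where
  "apps E ts = foldl App E ts"

definition arrs :: "ty list \<Rightarrow> ty \<Rightarrow> ty" where
  "arrs As B = foldr Arr As B"

text \<open>A function N^k \<rightarrow> N is modelled as f :: nat list \<Rightarrow> nat, relevant on lists of length k.
  Types of Church numerals are exactly the types omega \<tau>.\<close>
definition skewly_representable :: "nat \<Rightarrow> (nat list \<Rightarrow> nat) \<Rightarrow> bool" where
  "skewly_representable k f \<longleftrightarrow>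
     (\<exists>E \<tau>s \<sigma>. length \<tau>s = k \<and>
        typing [] E (arrs (map omega \<tau>s) (omega \<sigma>)) \<and>
        (\<forall>ns. length ns = k \<longrightarrow> beq (apps E (map church ns)) (church (f ns))))"

definition strictly_representable :: "nat \<Rightarrow> (nat list \<Rightarrow> nat) \<Rightarrow> bool" where
  "strictly_representable k f \<longleftrightarrow>
     (\<exists>E \<tau>. typing [] E (arrs (replicate k (omega \<tau>)) (omega \<tau>)) \<and>
        (\<forall>ns. length ns = k \<longrightarrow> beq (apps E (map church ns)) (church (f ns))))"

end

theory Submission
  imports Defs
begin

text \<open>Let \<open>E\<close> represent \<open>f\<close> at argument types \<open>\<omega>\<^sub>\<tau>\<^sub>i\<close> and result type \<open>\<omega>\<^sub>\<sigma>\<close>, and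
  let \<open>M\<close> bound the values of \<open>f\<close>. Substituting \<open>S = o\<^sup>M\<^sup>+\<^sup>1 \<Rightarrow> o\<close> for \<open>o\<close> keeps \<open>E\<close> typed.
  Call \<open>A\<close> coercible to \<open>B\<close> if some closed \<open>D : \<omega>\<^sub>A \<Rightarrow> \<omega>\<^sub>B\<close> satisfies \<open>D \<rho>(n) = \<rho>(n)\<close>;
  then \<open>\<lambda>x\<^sub>1 \<dots> x\<^sub>k. Q (E (D\<^sub>1 x\<^sub>1) \<dots> (D\<^sub>k x\<^sub>k))\<close> strictly represents \<open>f\<close> once a single
  type \<open>\<tau>\<close> is coercible to every argument type and the result type to \<open>\<tau>\<close>.
  Numerals can be iterated componentwise in \<open>(A \<Rightarrow> o) \<Rightarrow> (B \<Rightarrow> o) \<Rightarrow> o\<close> and recovered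
  by continuation passing, so nesting this pair type over the argument types gives \<open>\<tau>\<close>.
  The result type coerces to \<open>S\<close> by discarding arguments, which are inhabited after the
  substitution. Finally, \<open>S\<close> coerces to any type for numerals \<open>m \<le> M\<close>: iterating a shift
  on the projections \<open>\<lambda>x\<^sub>0 \<dots> x\<^sub>M. x\<^sub>j\<close> selects the \<open>m\<close>-th of \<open>z, s z, \<dots>, s\<^sup>M z\<close>.\<close>

lemma beq_refl [simp, intro]: "beq t t"
  by (simp add: beq_def)

lemma beq_trans [trans]: "beq s t \<Longrightarrow> beq t u \<Longrightarrow> beq s u"
  unfolding beq_def by (rule equivclp_trans)

lemma beq_step: "bestep s t \<Longrightarrow> beq s t"
  unfolding beq_def by (rule r_into_equivclp)

lemma equivclp_map:
  assumes "equivclp r a b" and "\<And>x y. r x y \<Longrightarrow> r (h x) (h y)"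
  shows "equivclp r (h a) (h b)"
  using assms(1) by induction (auto intro: equivclp_into_equivclp assms(2))

lemma beq_AppL: "beq s s' \<Longrightarrow> beq (App s t) (App s' t)"
  unfolding beq_def by (rule equivclp_map[where h="\<lambda>x. App x t"]) (auto intro: bestep.appL)

lemma beq_AppR: "beq t t' \<Longrightarrow> beq (App s t) (App s t')"
  unfolding beq_def by (rule equivclp_map[where h="App s"]) (auto intro: bestep.appR)

lemma beq_App: "beq s s' \<Longrightarrow> beq t t' \<Longrightarrow> beq (App s t) (App s' t')"
  by (meson beq_AppL beq_AppR beq_trans)

lemma beq_Abs: "beq s s' \<Longrightarrow> beq (Abs s) (Abs s')"
  unfolding beq_def by (rule equivclp_map[where h=Abs]) (auto intro: bestep.abs)

lemma beq_beta: "beq (App (Abs s) t) (subst s t 0)"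
  by (simp add: beq_step bestep.beta)

lemma beq_betaI: "beq (subst s t 0) u \<Longrightarrow> beq (App (Abs s) t) u"
  using beq_beta beq_trans by blast

lemma beq_eta: "beq (Abs (App (lift s 0) (Var 0))) s"
  by (simp add: beq_step bestep.eta)

lemma lift_lift: "i \<le> k \<Longrightarrow> lift (lift t i) (Suc k) = lift (lift t k) i"
  by (induct t arbitrary: i k) auto

lemma lift_lift0 [simp]: "lift (lift t 0) (Suc k) = lift (lift t k) 0"
  by (simp add: lift_lift)

lemma lift_subst_lt: "i \<le> j \<Longrightarrow> lift (subst t s j) i = subst (lift t i) (lift s i) (Suc j)"
  by (induct t arbitrary: i j s) (auto simp: lift_lift)

lemma subst_lift [simp]: "subst (lift t k) s k = t"
  by (induct t arbitrary: k s) simp_all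

fun closed_at :: "nat \<Rightarrow> tm \<Rightarrow> bool" where
  "closed_at k (Var i) = (i < k)"
| "closed_at k (App s t) = (closed_at k s \<and> closed_at k t)"
| "closed_at k (Abs s) = closed_at (Suc k) s"

lemma closed_at_mono: "closed_at k t \<Longrightarrow> k \<le> j \<Longrightarrow> closed_at j t"
  by (induct t arbitrary: k j) auto

lemma lift_closed_at: "closed_at k t \<Longrightarrow> k \<le> j \<Longrightarrow> lift t j = t"
  by (induct t arbitrary: k j) auto

lemma subst_closed_at: "closed_at k t \<Longrightarrow> k \<le> j \<Longrightarrow> subst t u j = t"
  by (induct t arbitrary: k j u) auto

lemma lift_closed [simp]: "closed_at 0 t \<Longrightarrow> lift t j = t"
  using lift_closed_at by blast

lemma subst_closed [simp]: "closed_at 0 t \<Longrightarrow> subst t u j = t"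
  using subst_closed_at by blast

lemma apps_Nil [simp]: "apps t [] = t"
  by (simp add: apps_def)

lemma apps_Cons [simp]: "apps t (y # ys) = apps (App t y) ys"
  by (simp add: apps_def)

lemma closed_at_apps [simp]: "closed_at k (apps t ys) \<longleftrightarrow> closed_at k t \<and> (\<forall>y\<in>set ys. closed_at k y)"
  by (induct ys arbitrary: t) (auto simp: apps_def)

lemma subst_apps [simp]: "subst (apps t ys) u k = apps (subst t u k) (map (\<lambda>y. subst y u k) ys)"
  by (induct ys arbitrary: t) auto

lemma beq_apps_head: "beq s s' \<Longrightarrow> beq (apps s ys) (apps s' ys)"
  by (induct ys arbitrary: s s') (auto intro: beq_AppL)

lemma beq_apps_args: "list_all2 beq ys ys' \<Longrightarrow> beq (apps s ys) (apps s ys')"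
proof (induct ys ys' arbitrary: s rule: list_all2_induct)
  case (Cons y ys y' ys')
  then show ?case by (metis apps_Cons beq_AppR beq_apps_head beq_trans)
qed simp

fun Absn :: "nat \<Rightarrow> tm \<Rightarrow> tm" where
  "Absn 0 t = t"
| "Absn (Suc q) t = Abs (Absn q t)"

fun lifts :: "nat \<Rightarrow> tm \<Rightarrow> tm" where
  "lifts 0 u = u"
| "lifts (Suc q) u = lift (lifts q u) 0"

definition bound_vars :: "nat \<Rightarrow> tm list" where
  "bound_vars q = rev (map Var [0..<q])"

lemma bound_vars_0 [simp]: "bound_vars 0 = []"
  by (simp add: bound_vars_def)

lemma bound_vars_Suc [simp]: "bound_vars (Suc q) = Var q # bound_vars q"
  by (simp add: bound_vars_def)

lemma length_bound_vars [simp]: "length (bound_vars q) = q"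
  by (simp add: bound_vars_def)

lemma nth_bound_vars: "i < q \<Longrightarrow> bound_vars q ! i = Var (q - Suc i)"
  by (simp add: bound_vars_def rev_nth)

lemma subst_bound_vars: "q \<le> k \<Longrightarrow> map (\<lambda>y. subst y u k) (bound_vars q) = bound_vars q"
  by (induct q) auto

lemma lifts_Var [simp]: "lifts q (Var i) = Var (i + q)"
  by (induct q) auto

lemma lifts_App [simp]: "lifts q (App s t) = App (lifts q s) (lifts q t)"
  by (induct q) auto

lemma lifts_lift: "lifts q (lift u 0) = lift (lifts q u) 0"
  by (induct q) auto

lemma lifts_closed [simp]: "closed_at 0 u \<Longrightarrow> lifts q u = u"
  by (induct q) auto

lemma lift_lifts: "k \<le> q \<Longrightarrow> lift (lifts q y) k = lifts (Suc q) y"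
proof (induct q arbitrary: k)
  case (Suc q)
  show ?case
  proof (cases k)
    case (Suc k')
    then have "lift (lifts (Suc q) y) k = lift (lift (lifts q y) k') 0"
      by (simp only: lifts.simps lift_lift0)
    also have "\<dots> = lifts (Suc (Suc q)) y"
      using Suc.hyps[of k'] Suc.prems \<open>k = Suc k'\<close> by simp
    finally show ?thesis .
  qed simp
qed simp

lemma subst_Absn: "subst (Absn q t) u k = Absn q (subst t (lifts q u) (k + q))"
  by (induct q arbitrary: k u) (auto simp: lifts_lift)

lemma closed_at_Absn [simp]: "closed_at k (Absn q t) = closed_at (k + q) t"
  by (induct q arbitrary: k) auto

lemma beq_Absn: "beq s s' \<Longrightarrow> beq (Absn q s) (Absn q s')"
  by (induct q) (auto intro: beq_Abs)

lemma beq_apps_Absn_lifts: "length ys = q \<Longrightarrow> beq (apps (Absn q (lifts q y)) ys) y"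
proof (induct q arbitrary: ys)
  case (Suc q)
  then obtain z zs where ys: "ys = z # zs" and l: "length zs = q" by (cases ys) auto
  have lifts_Suc: "lifts (Suc q) y = lift (lifts q y) q"
    using lift_lifts[of q q y] by simp
  have "beq (apps (Absn (Suc q) (lifts (Suc q) y)) ys) (apps (subst (Absn q (lifts (Suc q) y)) z 0) zs)"
    using ys beq_apps_head[OF beq_beta] by simp
  also have "subst (Absn q (lifts (Suc q) y)) z 0 = Absn q (lifts q y)"
    by (simp only: subst_Absn add_0 lifts_Suc subst_lift)
  also have "beq (apps (Absn q (lifts q y)) zs) y" using Suc(1)[OF l] .
  finally show ?case .
qed simp

lemma beq_apps_Absn_Var:
  "v < q \<Longrightarrow> length ys = q \<Longrightarrow> beq (apps (Absn q (Var v)) ys) (ys ! (q - Suc v))"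
proof (induct q arbitrary: ys)
  case (Suc q)
  then obtain z zs where ys: "ys = z # zs" and l: "length zs = q" by (cases ys) auto
  have "beq (apps (Absn (Suc q) (Var v)) ys) (apps (subst (Absn q (Var v)) z 0) zs)"
    using ys beq_apps_head[OF beq_beta] by simp
  also have "subst (Absn q (Var v)) z 0 = Absn q (subst (Var v) (lifts q z) q)"
    by (simp only: subst_Absn add_0)
  also have "beq (apps \<dots> zs) (ys ! (Suc q - Suc v))"
  proof (cases "v < q")
    case True
    then show ?thesis using Suc(1)[OF True l] ys by (simp add: Suc_diff_Suc)
  next
    case False
    then have "v = q" using Suc(2) by simp
    then show ?thesis using beq_apps_Absn_lifts[OF l] ys by simp
  qed
  finally show ?case .
qed simp

lemma beq_eta_bound_vars: "beq (Absn q (apps (lifts q t) (bound_vars q))) t"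
proof (induct q arbitrary: t)
  case (Suc q)
  have "Absn (Suc q) (apps (lifts (Suc q) t) (bound_vars (Suc q)))
      = Abs (Absn q (apps (lifts q (App (lift t 0) (Var 0))) (bound_vars q)))"
    by (simp add: lifts_lift)
  also have "beq \<dots> (Abs (App (lift t 0) (Var 0)))"
    by (rule beq_Abs[OF Suc])
  also have "beq \<dots> t" by (rule beq_eta)
  finally show ?case .
qed simp

lemma typing_VarI: "i < length \<Gamma> \<Longrightarrow> \<Gamma> ! i = T \<Longrightarrow> typing \<Gamma> (Var i) T"
  using typing.tvar by blast

lemma typing_closed_at: "typing \<Gamma> t T \<Longrightarrow> closed_at (length \<Gamma>) t"
  by (induct rule: typing.induct) auto

lemma typing_Nil_closed: "typing [] t T \<Longrightarrow> closed_at 0 t"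
  using typing_closed_at by fastforce

lemma typing_append: "typing \<Gamma> t T \<Longrightarrow> typing (\<Gamma> @ \<Delta>) t T"
proof (induct rule: typing.induct)
  case (tvar i \<Gamma>)
  then show ?case using typing.tvar[of i "\<Gamma> @ \<Delta>"] by (simp add: nth_append)
qed (auto intro: typing.intros)

lemma typing_Nil: "typing [] t T \<Longrightarrow> typing \<Gamma> t T"
  using typing_append[of "[]" t T \<Gamma>] by simp

lemma typing_lift:
  "typing \<Gamma> t T \<Longrightarrow> k \<le> length \<Gamma> \<Longrightarrow> typing (take k \<Gamma> @ U # drop k \<Gamma>) (lift t k) T"
proof (induct arbitrary: k rule: typing.induct)
  case (tvar i \<Gamma>)
  show ?case
    using tvar typing_VarI[of "if i < k then i else Suc i" "take k \<Gamma> @ U # drop k \<Gamma>"]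
    by (auto simp: nth_append min_def)
next
  case (tabs T \<Gamma> s U')
  from tabs(2)[of "Suc k"] tabs(3) show ?case by (auto intro: typing.tabs)
qed (auto intro: typing.tapp)

lemma typing_lift0: "typing \<Gamma> t T \<Longrightarrow> typing (U # \<Gamma>) (lift t 0) T"
  using typing_lift[of \<Gamma> t T 0 U] by simp

lemma typing_apps:
  "typing \<Gamma> t (arrs As T) \<Longrightarrow> list_all2 (typing \<Gamma>) ys As \<Longrightarrow> typing \<Gamma> (apps t ys) T"
proof (induct ys arbitrary: t As)
  case (Cons y ys)
  then obtain A As' where "As = A # As'" by (cases As) auto
  with Cons show ?case by (auto simp: arrs_def intro: typing.tapp)
qed (simp add: arrs_def)

lemma typing_Absn: "typing (rev As @ \<Gamma>) t T \<Longrightarrow> typing \<Gamma> (Absn (length As) t) (arrs As T)"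
proof (induct As arbitrary: \<Gamma>)
  case (Cons A As)
  then have "typing (rev As @ A # \<Gamma>) t T" by simp
  from Cons(1)[OF this] show ?case by (auto simp: arrs_def intro: typing.tabs)
qed (simp add: arrs_def)

lemma typing_bound_vars: "list_all2 (typing (rev As @ \<Gamma>)) (bound_vars (length As)) As"
  unfolding list_all2_conv_all_nth
  by (auto simp: nth_bound_vars nth_append rev_nth intro!: typing_VarI)

lemma ty_eq_arrs_O: "\<exists>As. T = arrs As ty.O"
proof (induct T)
  case O
  show ?case by (rule exI[of _ "[]"]) (simp add: arrs_def)
next
  case (Arr A B)
  then obtain As where "B = arrs As ty.O" by blast
  then show ?case by (intro exI[of _ "A # As"]) (simp add: arrs_def)
qed

fun subst_ty :: "ty \<Rightarrow> ty \<Rightarrow> ty" where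
  "subst_ty R ty.O = R"
| "subst_ty R (Arr A B) = Arr (subst_ty R A) (subst_ty R B)"

lemma subst_ty_arrs: "subst_ty R (arrs As B) = arrs (map (subst_ty R) As) (subst_ty R B)"
  by (induct As) (auto simp: arrs_def)

lemma subst_ty_omega: "subst_ty R (omega T) = omega (subst_ty R T)"
  by (simp add: omega_def)

lemma typing_subst_ty: "typing \<Gamma> t T \<Longrightarrow> typing (map (subst_ty R) \<Gamma>) t (subst_ty R T)"
proof (induct rule: typing.induct)
  case (tvar i \<Gamma>)
  then show ?case using typing.tvar[of i "map (subst_ty R) \<Gamma>"] by simp
qed (auto intro: typing.intros)

fun iter :: "tm \<Rightarrow> nat \<Rightarrow> tm \<Rightarrow> tm" where
  "iter a 0 b = b"
| "iter a (Suc j) b = App a (iter a j b)"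

lemma church_iter: "church n = Abs (Abs (iter (Var 1) n (Var 0)))"
proof -
  have "(App a ^^ n) b = iter a n b" for a b by (induct n) auto
  then show ?thesis by (simp add: church_def)
qed

lemma lift_iter [simp]: "lift (iter a n b) k = iter (lift a k) n (lift b k)"
  by (induct n) auto

lemma lifts_iter [simp]: "lifts q (iter a n b) = iter (lifts q a) n (lifts q b)"
  by (induct q) auto

lemma subst_iter [simp]: "subst (iter a n b) u k = iter (subst a u k) n (subst b u k)"
  by (induct n) auto

lemma closed_at_iter [simp]: "closed_at k (iter a n b) \<longleftrightarrow> (n = 0 \<or> closed_at k a) \<and> closed_at k b"
  by (induct n) auto

lemma closed_church [simp]: "closed_at 0 (church n)"
  by (simp add: church_iter)

lemma typing_iter: "typing \<Gamma> a (Arr T T) \<Longrightarrow> typing \<Gamma> b T \<Longrightarrow> typing \<Gamma> (iter a n b) T"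
  by (induct n) (auto intro: typing.tapp)

lemma beq_church_App: "beq (App (App (church n) F) X) (iter F n X)"
proof -
  have "beq (App (church n) F) (Abs (iter (lift F 0) n (Var 0)))"
    unfolding church_iter by (rule beq_betaI) simp
  then have "beq (App (App (church n) F) X) (App (Abs (iter (lift F 0) n (Var 0))) X)"
    by (rule beq_AppL)
  also have "beq \<dots> (iter F n X)" by (rule beq_betaI) simp
  finally show ?thesis .
qed

text \<open>The indices are stated as equations so that the lemma also applies to numerals.\<close>

lemma beq_eta_iter:
  "a' = Suc a \<Longrightarrow> b' = Suc b \<Longrightarrow> beq (Abs (App (iter (Var a') j (Var b')) (Var 0))) (iter (Var a) j (Var b))"
  using beq_eta[of "iter (Var a) j (Var b)"] by simp

text \<open>A reduction strategy that may be run by the simplifier: it contracts a head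
  redex, and otherwise proceeds in parallel into the subterms of an application.\<close>

fun reduce_step :: "tm \<Rightarrow> tm" where
  "reduce_step (Var i) = Var i"
| "reduce_step (Abs s) = Abs (reduce_step s)"
| "reduce_step (App (Abs s) t) = subst s t 0"
| "reduce_step (App (Var i) t) = App (Var i) (reduce_step t)"
| "reduce_step (App (App a b) t) = App (reduce_step (App a b)) (reduce_step t)"

lemma beq_reduce_step: "beq t (reduce_step t)"
  by (induct t rule: reduce_step.induct) (auto intro: beq_App beq_Abs beq_beta)

lemma beq_by_reduction: "(reduce_step ^^ k) s = t \<Longrightarrow> beq s t"
proof (induct k arbitrary: t)
  case (Suc k)
  then show ?case using beq_reduce_step beq_trans by auto
qed simp

lemma reduce_step_iter [simp]: "reduce_step (iter (Var i) j b) = iter (Var i) j (reduce_step b)"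
  by (induct j) auto

lemma reduce_step_App_iter [simp]:
  "reduce_step (App (iter (Var i) j (Var l)) t) = App (iter (Var i) j (Var l)) (reduce_step t)"
  by (cases j) auto

section \<open>Coercions between types of numerals\<close>

definition coercible :: "(nat \<Rightarrow> bool) \<Rightarrow> ty \<Rightarrow> ty \<Rightarrow> bool" where
  "coercible P A B \<longleftrightarrow> (\<exists>D. typing [] D (Arr (omega A) (omega B)) \<and>
      (\<forall>n. P n \<longrightarrow> beq (App D (church n)) (church n)))"

lemma coercible_refl: "coercible P A A"
proof -
  have "typing [] (Abs (Var 0)) (Arr (omega A) (omega A))"
    by (intro typing.tabs typing_VarI) simp_all
  moreover have "beq (App (Abs (Var 0)) (church n)) (church n)" for n
    by (rule beq_betaI) simp
  ultimately show ?thesis unfolding coercible_def by blast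
qed

lemma coercible_trans:
  assumes "coercible P A B" and "coercible P B C"
  shows "coercible P A C"
proof -
  obtain D1 where D1: "typing [] D1 (Arr (omega A) (omega B))"
    and D1_church: "\<And>n. P n \<Longrightarrow> beq (App D1 (church n)) (church n)"
    using assms(1) coercible_def by blast
  obtain D2 where D2: "typing [] D2 (Arr (omega B) (omega C))"
    and D2_church: "\<And>n. P n \<Longrightarrow> beq (App D2 (church n)) (church n)"
    using assms(2) coercible_def by blast
  let ?D = "Abs (App D2 (App D1 (Var 0)))"
  have "typing [] ?D (Arr (omega A) (omega C))"
    by (intro typing.tabs typing.tapp[OF typing_Nil[OF D2]] typing.tapp[OF typing_Nil[OF D1]]
        typing_VarI) simp_all
  moreover have "beq (App ?D (church n)) (church n)" if "P n" for n
  proof -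
    have "beq (App ?D (church n)) (App D2 (App D1 (church n)))"
      by (rule beq_betaI) (simp add: typing_Nil_closed[OF D1] typing_Nil_closed[OF D2])
    also have "beq \<dots> (App D2 (church n))" using D1_church[OF that] by (rule beq_AppR)
    also have "beq \<dots> (church n)" using D2_church[OF that] .
    finally show ?thesis .
  qed
  ultimately show ?thesis unfolding coercible_def by blast
qed

text \<open>The coercion is \<open>\<lambda>n f x. Dec (n L Enc)\<close>, where \<open>L\<close>, \<open>Enc\<close> and \<open>Dec\<close> may use
  \<open>f = Var 1\<close> and \<open>x = Var 0\<close>: a numeral is iterated at type \<open>\<tau>\<close> on a simulation \<open>L\<close>
  of \<open>f\<close>, and the result is decoded back to \<open>T\<close>.\<close>

lemma coercible_by_iteration:
  assumes L: "typing [T, Arr T T] L (Arr \<tau> \<tau>)"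
    and Enc: "typing [T, Arr T T] Enc \<tau>"
    and Dec: "typing [T, Arr T T] Dec (Arr \<tau> T)"
    and decode: "\<And>n. P n \<Longrightarrow> beq (App Dec (iter L n Enc)) (iter (Var 1) n (Var 0))"
  shows "coercible P \<tau> T"
proof -
  let ?\<Gamma> = "[T, Arr T T, omega \<tau>]"
  let ?D = "Abs (Abs (Abs (App Dec (App (App (Var 2) L) Enc))))"
  have weaken: "typing ?\<Gamma> t U" if "typing [T, Arr T T] t U" for t U
    using typing_append[OF that, of "[omega \<tau>]"] by simp
  have "typing ?\<Gamma> (App Dec (App (App (Var 2) L) Enc)) T"
    by (intro typing.tapp[OF weaken[OF Dec]] typing.tapp[OF _ weaken[OF Enc]]
        typing.tapp[OF _ weaken[OF L]] typing_VarI) (simp_all add: omega_def)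
  then have "typing [] ?D (Arr (omega \<tau>) (omega T))"
    by (auto intro!: typing.tabs simp: omega_def)
  moreover have "beq (App ?D (church n)) (church n)" if "P n" for n
  proof -
    have "subst t u 2 = t" if "typing [T, Arr T T] t U" for t u U
      using subst_closed_at[OF typing_closed_at[OF that]] by simp
    then have "beq (App ?D (church n)) (Abs (Abs (App Dec (App (App (church n) L) Enc))))"
      using L Enc Dec by (intro beq_betaI) (simp add: numeral_2_eq_2)
    also have "beq \<dots> (Abs (Abs (App Dec (iter L n Enc))))"
      by (intro beq_Abs beq_AppR beq_church_App)
    also have "beq \<dots> (church n)"
      unfolding church_iter by (intro beq_Abs decode that)
    finally show ?thesis .
  qed
  ultimately show ?thesis unfolding coercible_def by blast
qed

lemma coercible_drop_arg:
  assumes d: "typing [] d A"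
  shows "coercible P (Arr A C) C"
proof -
  let ?L = "Abs (Abs (App (Var 3) (App (Var 1) (Var 0))))"
  let ?Enc = "Abs (Var 1)"
  let ?Dec = "Abs (App (Var 0) d)"
  have iterate: "beq (iter ?L j ?Enc) (Abs (iter (Var 2) j (Var 1)))" for j
  proof (induct j)
    case (Suc j)
    have "beq (iter ?L (Suc j) ?Enc) (App ?L (Abs (iter (Var 2) j (Var 1))))"
      using Suc by (simp add: beq_AppR)
    also have "beq \<dots> (Abs (iter (Var 2) (Suc j) (Var 1)))"
      by (rule beq_by_reduction[where k="Suc (Suc 0)"]) simp
    finally show ?case .
  qed simp
  show ?thesis
  proof (rule coercible_by_iteration[where L="?L" and Enc="?Enc" and Dec="?Dec"])
    show "typing [C, Arr C C] ?L (Arr (Arr A C) (Arr A C))"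
      by (rule typing.tabs typing.tapp typing_VarI | simp)+
    show "typing [C, Arr C C] ?Enc (Arr A C)"
      by (rule typing.tabs typing.tapp typing_VarI | simp)+
    show "typing [C, Arr C C] ?Dec (Arr (Arr A C) C)"
      by (rule typing.tabs typing.tapp typing_VarI typing_Nil[OF d] | simp)+
    fix n
    have "beq (App ?Dec (iter ?L n ?Enc)) (App ?Dec (Abs (iter (Var 2) n (Var 1))))"
      using iterate by (rule beq_AppR)
    also have "beq \<dots> (iter (Var 1) n (Var 0))"
      by (rule beq_by_reduction[where k="Suc (Suc 0)"]) (simp add: typing_Nil_closed[OF d])
    finally show "beq (App ?Dec (iter ?L n ?Enc)) (iter (Var 1) n (Var 0))" .
  qed
qed

fun dneg_elim :: "ty \<Rightarrow> tm" where
  "dneg_elim ty.O = Abs (App (Var 0) (Abs (Var 0)))"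
| "dneg_elim (Arr A C) =
    Abs (Abs (App (dneg_elim C) (Abs (App (Var 2) (Abs (App (Var 1) (App (Var 0) (Var 2))))))))"

lemma closed_dneg_elim [simp]: "closed_at 0 (dneg_elim T)"
  by (induct T) (auto intro: closed_at_mono)

lemma typing_dneg_elim: "typing \<Gamma> (dneg_elim T) (Arr (Arr (Arr T ty.O) ty.O) T)"
proof (induct T arbitrary: \<Gamma>)
  case O
  show ?case by (rule typing.tabs typing.tapp typing_VarI | simp)+
next
  case (Arr A C)
  show ?case
    unfolding dneg_elim.simps
    by (intro typing.tabs typing.tapp[OF Arr(2)]) (rule typing.tabs typing.tapp typing_VarI | simp)+
qed

lemma beq_dneg_elim: "beq (App (dneg_elim T) (Abs (App (Var 0) (lift X 0)))) X"
proof (induct T arbitrary: X)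
  case O
  show ?case by (rule beq_by_reduction[where k="Suc (Suc (Suc 0))"]) simp
next
  case (Arr A C)
  let ?X' = "App (lift X 0) (Var 0)"
  have "beq (App (dneg_elim (Arr A C)) (Abs (App (Var 0) (lift X 0))))
     (Abs (App (dneg_elim C) (Abs (App (Abs (App (Var 0) (lift (lift (lift X 0) 0) 0)))
          (Abs (App (Var 1) (App (Var 0) (Var 2))))))))"
    unfolding dneg_elim.simps by (rule beq_betaI) simp
  also have "beq \<dots> (Abs (App (dneg_elim C) (Abs (App (Var 0) (lift ?X' 0)))))"
    by (intro beq_Abs beq_AppR, rule beq_by_reduction[where k="Suc (Suc 0)"]) simp
  also have "beq \<dots> (Abs ?X')"
    by (intro beq_Abs Arr(2))
  also have "beq \<dots> X" by (rule beq_eta)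
  finally show ?case .
qed

lemma coercible_dneg: "coercible P (Arr (Arr T ty.O) ty.O) T"
proof -
  let ?L = "Abs (Abs (App (Var 1) (Abs (App (Var 1) (App (Var 4) (Var 0))))))"
  let ?Enc = "Abs (App (Var 0) (Var 1))"
  have iterate: "beq (iter ?L j ?Enc) (Abs (App (Var 0) (lift (iter (Var 1) j (Var 0)) 0)))" for j
  proof (induct j)
    case (Suc j)
    have "beq (iter ?L (Suc j) ?Enc) (App ?L (Abs (App (Var 0) (lift (iter (Var 1) j (Var 0)) 0))))"
      using Suc by (simp add: beq_AppR)
    also have "beq \<dots> (Abs (App (Var 0) (lift (iter (Var 1) (Suc j) (Var 0)) 0)))"
      by (rule beq_by_reduction[where k="Suc (Suc (Suc 0))"]) simp
    finally show ?case .
  qed simp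
  show ?thesis
  proof (rule coercible_by_iteration[where L="?L" and Enc="?Enc" and Dec="dneg_elim T"])
    show "typing [T, Arr T T] ?L (Arr (Arr (Arr T ty.O) ty.O) (Arr (Arr T ty.O) ty.O))"
      by (rule typing.tabs typing.tapp typing_VarI | simp)+
    show "typing [T, Arr T T] ?Enc (Arr (Arr T ty.O) ty.O)"
      by (rule typing.tabs typing.tapp typing_VarI | simp)+
    show "typing [T, Arr T T] (dneg_elim T) (Arr (Arr (Arr T ty.O) ty.O) T)"
      by (rule typing_dneg_elim)
    fix n
    show "beq (App (dneg_elim T) (iter ?L n ?Enc)) (iter (Var 1) n (Var 0))"
      using beq_AppR[OF iterate] beq_dneg_elim beq_trans by blast
  qed
qed

text \<open>For iteration, \<open>pair_ty A B\<close> serves as a product of \<open>A\<close> and \<open>B\<close>: the iterates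
  \<open>\<lambda>a b. a (f\<^sup>n x)\<close> and \<open>\<lambda>a b. b (f\<^sup>n x)\<close> can be computed in it and then read
  off in continuation-passing form.\<close>

definition pair_ty :: "ty \<Rightarrow> ty \<Rightarrow> ty" where
  "pair_ty A B = Arr (Arr A ty.O) (Arr (Arr B ty.O) ty.O)"

lemma coercible_pair_ty_dneg_fst: "coercible P (pair_ty A B) (Arr (Arr A ty.O) ty.O)"
proof -
  let ?T = "Arr (Arr A ty.O) ty.O"
  let ?L = "Abs (Abs (Abs (App (App (Var 4) (Abs (App (App (Var 3) (Var 0)) (Var 1)))) (Var 1))))"
  let ?Enc = "Abs (Abs (App (Var 2) (Var 1)))"
  let ?Dec = "Abs (Abs (App (App (Var 1) (Var 0)) (Abs (App (Var 3) (Var 1)))))"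
  have iterate: "beq (iter ?L j ?Enc) (Abs (Abs (App (iter (Var 3) j (Var 2)) (Var 1))))" for j
  proof (induct j)
    case (Suc j)
    have "beq (iter ?L (Suc j) ?Enc) (App ?L (Abs (Abs (App (iter (Var 3) j (Var 2)) (Var 1)))))"
      using Suc by (simp add: beq_AppR)
    also have "beq \<dots> (Abs (Abs (App (App (Var 3) (Abs (App (iter (Var 4) j (Var 3)) (Var 0)))) (Var 1))))"
      by (rule beq_by_reduction[where k="Suc (Suc (Suc 0))"]) simp
    also have "beq \<dots> (Abs (Abs (App (iter (Var 3) (Suc j) (Var 2)) (Var 1))))"
      by (simp, intro beq_Abs beq_AppL beq_AppR beq_eta_iter) simp_all
    finally show ?case .
  qed simp
  show ?thesis unfolding pair_ty_def
  proof (rule coercible_by_iteration[where L="?L" and Enc="?Enc" and Dec="?Dec"])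
    show "typing [?T, Arr ?T ?T] ?L (Arr (Arr (Arr A ty.O) (Arr (Arr B ty.O) ty.O))
        (Arr (Arr A ty.O) (Arr (Arr B ty.O) ty.O)))"
      by (rule typing.tabs typing.tapp typing_VarI | simp)+
    show "typing [?T, Arr ?T ?T] ?Enc (Arr (Arr A ty.O) (Arr (Arr B ty.O) ty.O))"
      by (rule typing.tabs typing.tapp typing_VarI | simp)+
    show "typing [?T, Arr ?T ?T] ?Dec (Arr (Arr (Arr A ty.O) (Arr (Arr B ty.O) ty.O)) ?T)"
      by (rule typing.tabs typing.tapp typing_VarI | simp)+
    fix n
    have "beq (App ?Dec (iter ?L n ?Enc)) (App ?Dec (Abs (Abs (App (iter (Var 3) n (Var 2)) (Var 1)))))"
      using iterate by (rule beq_AppR)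
    also have "beq \<dots> (Abs (App (iter (Var 2) n (Var 1)) (Var 0)))"
      by (rule beq_by_reduction[where k="Suc (Suc (Suc 0))"]) simp
    also have "beq \<dots> (iter (Var 1) n (Var 0))"
      by (rule beq_eta_iter) simp_all
    finally show "beq (App ?Dec (iter ?L n ?Enc)) (iter (Var 1) n (Var 0))" .
  qed
qed

lemma coercible_pair_ty_dneg_snd: "coercible P (pair_ty A B) (Arr (Arr B ty.O) ty.O)"
proof -
  let ?T = "Arr (Arr B ty.O) ty.O"
  let ?L = "Abs (Abs (Abs (App (App (Var 4) (Abs (App (App (Var 3) (Var 2)) (Var 0)))) (Var 0))))"
  let ?Enc = "Abs (Abs (App (Var 2) (Var 0)))"
  let ?Dec = "Abs (Abs (App (App (Var 1) (Abs (App (Var 3) (Var 1)))) (Var 0)))"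
  have iterate: "beq (iter ?L j ?Enc) (Abs (Abs (App (iter (Var 3) j (Var 2)) (Var 0))))" for j
  proof (induct j)
    case (Suc j)
    have "beq (iter ?L (Suc j) ?Enc) (App ?L (Abs (Abs (App (iter (Var 3) j (Var 2)) (Var 0)))))"
      using Suc by (simp add: beq_AppR)
    also have "beq \<dots> (Abs (Abs (App (App (Var 3) (Abs (App (iter (Var 4) j (Var 3)) (Var 0)))) (Var 0))))"
      by (rule beq_by_reduction[where k="Suc (Suc (Suc 0))"]) simp
    also have "beq \<dots> (Abs (Abs (App (iter (Var 3) (Suc j) (Var 2)) (Var 0))))"
      by (simp, intro beq_Abs beq_AppL beq_AppR beq_eta_iter) simp_all
    finally show ?case .
  qed simp
  show ?thesis unfolding pair_ty_def
  proof (rule coercible_by_iteration[where L="?L" and Enc="?Enc" and Dec="?Dec"])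
    show "typing [?T, Arr ?T ?T] ?L (Arr (Arr (Arr A ty.O) (Arr (Arr B ty.O) ty.O))
        (Arr (Arr A ty.O) (Arr (Arr B ty.O) ty.O)))"
      by (rule typing.tabs typing.tapp typing_VarI | simp)+
    show "typing [?T, Arr ?T ?T] ?Enc (Arr (Arr A ty.O) (Arr (Arr B ty.O) ty.O))"
      by (rule typing.tabs typing.tapp typing_VarI | simp)+
    show "typing [?T, Arr ?T ?T] ?Dec (Arr (Arr (Arr A ty.O) (Arr (Arr B ty.O) ty.O)) ?T)"
      by (rule typing.tabs typing.tapp typing_VarI | simp)+
    fix n
    have "beq (App ?Dec (iter ?L n ?Enc)) (App ?Dec (Abs (Abs (App (iter (Var 3) n (Var 2)) (Var 0)))))"
      using iterate by (rule beq_AppR)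
    also have "beq \<dots> (Abs (App (iter (Var 2) n (Var 1)) (Var 0)))"
      by (rule beq_by_reduction[where k="Suc (Suc (Suc 0))"]) simp
    also have "beq \<dots> (iter (Var 1) n (Var 0))"
      by (rule beq_eta_iter) simp_all
    finally show "beq (App ?Dec (iter ?L n ?Enc)) (iter (Var 1) n (Var 0))" .
  qed
qed

lemma coercible_pair_ty_fst: "coercible P (pair_ty A B) A"
  using coercible_trans[OF coercible_pair_ty_dneg_fst coercible_dneg] .

lemma coercible_pair_ty_snd: "coercible P (pair_ty A B) B"
  using coercible_trans[OF coercible_pair_ty_dneg_snd coercible_dneg] .

fun tuple_ty :: "ty list \<Rightarrow> ty" where
  "tuple_ty [] = ty.O"
| "tuple_ty (T # Ts) = pair_ty T (tuple_ty Ts)"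

lemma coercible_tuple_ty: "T \<in> set Ts \<Longrightarrow> coercible P (tuple_ty Ts) T"
  by (induct Ts) (auto intro: coercible_pair_ty_fst coercible_trans[OF coercible_pair_ty_snd])

section \<open>Numerals of bounded value\<close>

text \<open>The numerals \<open>m \<le> M\<close> at type \<open>proj_ty M\<close> iterate \<open>proj_succ M\<close>, which maps the
  projection \<open>proj M j = \<lambda>x\<^sub>0 \<dots> x\<^sub>M. x\<^sub>j\<close> to \<open>proj M (min (j + 1) M)\<close>.\<close>

definition proj_ty :: "nat \<Rightarrow> ty" where
  "proj_ty M = arrs (replicate (Suc M) ty.O) ty.O"

definition proj :: "nat \<Rightarrow> nat \<Rightarrow> tm" where
  "proj M j = Absn (Suc M) (Var (M - j))"

definition proj_succ :: "nat \<Rightarrow> tm" where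
  "proj_succ M = Abs (Absn (Suc M) (apps (Var (Suc M)) (bound_vars M @ [Var 0])))"

lemma closed_proj [simp]: "closed_at 0 (proj M j)"
  by (simp add: proj_def)

lemma closed_proj_succ [simp]: "closed_at 0 (proj_succ M)"
  by (auto simp: proj_succ_def bound_vars_def)

lemma typing_proj: "typing \<Gamma> (proj M j) (proj_ty M)"
proof -
  have "typing (rev (replicate (Suc M) ty.O) @ \<Gamma>) (Var (M - j)) ty.O"
    by (rule typing_VarI) (simp_all add: nth_append)
  from typing_Absn[OF this] show ?thesis unfolding proj_def proj_ty_def by simp
qed

lemma typing_proj_succ: "typing \<Gamma> (proj_succ M) (Arr (proj_ty M) (proj_ty M))"
proof -
  let ?\<Gamma> = "rev (replicate (Suc M) ty.O) @ proj_ty M # \<Gamma>"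
  have "typing ?\<Gamma> (Var (Suc M)) (arrs (replicate (Suc M) ty.O) ty.O)"
    by (rule typing_VarI) (auto simp: nth_append proj_ty_def)
  moreover have "list_all2 (typing ?\<Gamma>) (bound_vars M @ [Var 0]) (replicate (Suc M) ty.O)"
    unfolding list_all2_conv_all_nth
    by (auto simp: nth_append nth_bound_vars nth_Cons' intro!: typing_VarI)
  ultimately have "typing ?\<Gamma> (apps (Var (Suc M)) (bound_vars M @ [Var 0])) ty.O"
    by (rule typing_apps)
  then show ?thesis
    unfolding proj_succ_def
    using typing_Absn[of "replicate (Suc M) ty.O" "proj_ty M # \<Gamma>"]
    by (auto intro!: typing.tabs simp: proj_ty_def)
qed

lemma beq_proj_succ_proj: "j \<le> M \<Longrightarrow> beq (App (proj_succ M) (proj M j)) (proj M (min (Suc j) M))"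
proof -
  assume j: "j \<le> M"
  have "beq (App (proj_succ M) (proj M j)) (Absn (Suc M) (apps (proj M j) (bound_vars M @ [Var 0])))"
    unfolding proj_succ_def by (intro beq_betaI) (simp add: subst_Absn subst_bound_vars)
  also have "beq \<dots> (Absn (Suc M) ((bound_vars M @ [Var 0]) ! (Suc M - Suc (M - j))))"
    unfolding proj_def by (intro beq_Absn beq_apps_Absn_Var) auto
  also have "(bound_vars M @ [Var 0]) ! (Suc M - Suc (M - j)) = Var (M - min (Suc j) M)"
    using j by (auto simp: nth_append nth_bound_vars min_def)
  finally show ?thesis by (simp add: proj_def)
qed

lemma beq_iter_proj_succ: "beq (iter (proj_succ M) m (proj M 0)) (proj M (min m M))"
proof (induct m)
  case (Suc m)
  have "beq (iter (proj_succ M) (Suc m) (proj M 0)) (App (proj_succ M) (proj M (min m M)))"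
    using Suc by (simp add: beq_AppR)
  also have "beq \<dots> (proj M (min (Suc (min m M)) M))" by (rule beq_proj_succ_proj) simp
  also have "min (Suc (min m M)) M = min (Suc m) M" by (simp add: min_def)
  finally show ?case .
qed simp

text \<open>For \<open>r = length As\<close>, \<open>select_iterate M r\<close> is
  \<open>\<lambda>n s z a\<^sub>1 \<dots> a\<^sub>r. n (proj_succ M) (proj M 0) (z a\<^sub>1 \<dots> a\<^sub>r) (s z a\<^sub>1 \<dots> a\<^sub>r) \<dots> (s\<^sup>M z a\<^sub>1 \<dots> a\<^sub>r)\<close>,
  a coercion from \<open>proj_ty M\<close> to \<open>arrs As o\<close>.\<close>

definition select_iterate_args :: "nat \<Rightarrow> nat \<Rightarrow> tm list" where
  "select_iterate_args M r = map (\<lambda>j. apps (iter (Var (Suc r)) j (Var r)) (bound_vars r)) [0..<Suc M]"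

definition select_iterate :: "nat \<Rightarrow> nat \<Rightarrow> tm" where
  "select_iterate M r = Abs (Abs (Abs (Absn r
     (apps (App (App (Var (Suc (Suc r))) (proj_succ M)) (proj M 0)) (select_iterate_args M r)))))"

lemma typing_select_iterate:
  "typing [] (select_iterate M (length As)) (Arr (omega (proj_ty M)) (omega (arrs As ty.O)))"
proof -
  let ?T = "arrs As ty.O"
  let ?\<Gamma> = "rev As @ [?T, Arr ?T ?T, omega (proj_ty M)]"
  have "typing ?\<Gamma> (Var (Suc (Suc (length As)))) (omega (proj_ty M))"
    by (rule typing_VarI) (auto simp: nth_append)
  then have head: "typing ?\<Gamma> (App (App (Var (Suc (Suc (length As)))) (proj_succ M)) (proj M 0))
      (arrs (replicate (Suc M) ty.O) ty.O)"
    unfolding omega_def proj_ty_def[symmetric]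
    by (rule typing.tapp[OF typing.tapp[OF _ typing_proj_succ] typing_proj])
  have "typing ?\<Gamma> (apps (iter (Var (Suc (length As))) j (Var (length As))) (bound_vars (length As))) ty.O"
    for j
    by (rule typing_apps[OF _ typing_bound_vars], intro typing_iter typing_VarI) (auto simp: nth_append)
  then have "list_all2 (typing ?\<Gamma>) (select_iterate_args M (length As)) (replicate (Suc M) ty.O)"
    by (auto simp: select_iterate_args_def list_all2_conv_all_nth simp del: upt_Suc replicate_Suc)
  from typing_apps[OF head this] show ?thesis
    unfolding select_iterate_def omega_def by (intro typing.tabs) (use typing_Absn in fastforce)
qed

lemma beq_select_iterate: "m \<le> M \<Longrightarrow> beq (App (select_iterate M r) (church m)) (church m)"
proof -
  assume m: "m \<le> M"
  let ?c = "church m"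
  let ?args = "select_iterate_args M r"
  have "subst y u (Suc (Suc r)) = y" if "y \<in> set ?args" for y u
    using that by (intro subst_closed_at[of "Suc (Suc r)"]) (auto simp: select_iterate_args_def bound_vars_def)
  then have "beq (App (select_iterate M r) ?c)
      (Abs (Abs (Absn r (apps (App (App ?c (proj_succ M)) (proj M 0)) ?args))))"
    unfolding select_iterate_def by (intro beq_betaI) (simp add: subst_Absn map_idI)
  also have "beq \<dots> (Abs (Abs (Absn r (apps (proj M m) ?args))))"
  proof (intro beq_Abs beq_Absn beq_apps_head)
    have "beq (App (App ?c (proj_succ M)) (proj M 0)) (iter (proj_succ M) m (proj M 0))"
      by (rule beq_church_App)
    also have "beq \<dots> (proj M m)" using beq_iter_proj_succ[of M m] m by (simp add: min_def)
    finally show "beq (App (App ?c (proj_succ M)) (proj M 0)) (proj M m)" .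
  qed
  also have "beq \<dots> (Abs (Abs (Absn r (?args ! (Suc M - Suc (M - m))))))"
    unfolding proj_def
    by (intro beq_Abs beq_Absn beq_apps_Absn_Var) (auto simp: select_iterate_args_def)
  also have "?args ! (Suc M - Suc (M - m)) = apps (lifts r (iter (Var 1) m (Var 0))) (bound_vars r)"
    using m by (simp add: select_iterate_args_def nth_append del: upt_Suc)
  also have "beq (Abs (Abs (Absn r \<dots>))) ?c"
    unfolding church_iter by (intro beq_Abs beq_eta_bound_vars)
  finally show ?thesis .
qed

lemma coercible_proj_ty: "coercible (\<lambda>n. n \<le> M) (proj_ty M) T"
proof -
  obtain As where "T = arrs As ty.O" using ty_eq_arrs_O by blast
  then show ?thesis
    using typing_select_iterate beq_select_iterate unfolding coercible_def by blast
qed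

fun inhabitant :: "nat \<Rightarrow> ty \<Rightarrow> tm" where
  "inhabitant M ty.O = proj M 0"
| "inhabitant M (Arr A C) = Abs (inhabitant M C)"

lemma typing_inhabitant: "typing \<Gamma> (inhabitant M A) (subst_ty (proj_ty M) A)"
  by (induct A arbitrary: \<Gamma>) (auto intro: typing.tabs typing_proj)

lemma coercible_subst_ty_proj_ty: "coercible P (subst_ty (proj_ty M) \<sigma>) (proj_ty M)"
proof (induct \<sigma>)
  case (Arr A C)
  then show ?case using coercible_trans[OF coercible_drop_arg[OF typing_inhabitant]] by simp
qed (simp add: coercible_refl)

section \<open>Strict representations\<close>

text \<open>\<open>coerced [D\<^sub>1, \<dots>, D\<^sub>k] Q X\<close> is \<open>\<lambda>x\<^sub>1 \<dots> x\<^sub>k. Q (X (D\<^sub>1 x\<^sub>1) \<dots> (D\<^sub>k x\<^sub>k))\<close>;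
  the partial application of \<open>X\<close> is accumulated under the binders.\<close>

fun coerced :: "tm list \<Rightarrow> tm \<Rightarrow> tm \<Rightarrow> tm" where
  "coerced [] Q X = App Q X"
| "coerced (D # Ds) Q X = Abs (coerced Ds Q (App (lift X 0) (App D (Var 0))))"

lemma subst_coerced:
  assumes "\<forall>D\<in>set Ds. closed_at 0 D" and "closed_at 0 Q" and "closed_at 0 c"
  shows "subst (coerced Ds Q X) c j = coerced Ds Q (subst X c j)"
  using assms
proof (induct Ds arbitrary: X j)
  case (Cons D Ds)
  have "subst (lift X 0) c (Suc j) = lift (subst X c j) 0"
    using lift_subst_lt[of 0 j X c] Cons.prems by simp
  then show ?case using Cons by simp
qed simp

lemma beq_apps_coerced:
  assumes "\<forall>D\<in>set Ds. closed_at 0 D" and "closed_at 0 Q" and "length ns = length Ds"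
  shows "beq (apps (coerced Ds Q X) (map church ns))
    (App Q (apps X (map2 (\<lambda>D n. App D (church n)) Ds ns)))"
  using assms
proof (induct Ds arbitrary: ns X)
  case (Cons D Ds)
  then obtain n ns' where ns: "ns = n # ns'" "length ns' = length Ds" by (cases ns) auto
  have "beq (apps (coerced (D # Ds) Q X) (map church ns))
      (apps (subst (coerced Ds Q (App (lift X 0) (App D (Var 0)))) (church n) 0) (map church ns'))"
    using ns beq_apps_head[OF beq_beta] by simp
  also have "subst (coerced Ds Q (App (lift X 0) (App D (Var 0)))) (church n) 0
      = coerced Ds Q (App X (App D (church n)))"
    using Cons.prems by (simp add: subst_coerced)
  also have "beq (apps \<dots> (map church ns'))
      (App Q (apps (App X (App D (church n))) (map2 (\<lambda>D n. App D (church n)) Ds ns')))"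
    using Cons ns by simp
  finally show ?case using ns by simp
qed simp

lemma typing_coerced:
  assumes "typing \<Gamma> X (arrs (map omega Us) (omega \<sigma>))"
    and "list_all2 (\<lambda>D U. typing [] D (Arr (omega \<tau>) (omega U))) Ds Us"
    and "typing [] Q (Arr (omega \<sigma>) (omega \<tau>))"
  shows "typing \<Gamma> (coerced Ds Q X) (arrs (replicate (length Ds) (omega \<tau>)) (omega \<tau>))"
  using assms
proof (induct Ds arbitrary: Us \<Gamma> X)
  case Nil
  then show ?case by (auto simp: arrs_def intro: typing.tapp typing_Nil)
next
  case (Cons D Ds)
  obtain U Us' where Us: "Us = U # Us'"
    and Ds: "list_all2 (\<lambda>D U. typing [] D (Arr (omega \<tau>) (omega U))) Ds Us'"
    and D: "typing [] D (Arr (omega \<tau>) (omega U))"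
    using Cons.prems(2) by (auto simp: list_all2_Cons1)
  have "typing (omega \<tau> # \<Gamma>) (lift X 0) (Arr (omega U) (arrs (map omega Us') (omega \<sigma>)))"
    using typing_lift0[OF Cons.prems(1)] Us by (simp add: arrs_def)
  moreover have "typing (omega \<tau> # \<Gamma>) (App D (Var 0)) (omega U)"
    by (rule typing.tapp[OF typing_Nil[OF D]]) (rule typing_VarI, simp_all)
  ultimately have "typing (omega \<tau> # \<Gamma>) (App (lift X 0) (App D (Var 0))) (arrs (map omega Us') (omega \<sigma>))"
    by (rule typing.tapp)
  from Cons.hyps[OF this Ds Cons.prems(3)] show ?case
    by (auto simp: arrs_def intro: typing.tabs)
qed

lemma obtain_coercions:
  assumes "\<And>U. U \<in> set Us \<Longrightarrow> coercible (\<lambda>_. True) \<tau> U"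
  obtains Ds where "list_all2 (\<lambda>D U. typing [] D (Arr (omega \<tau>) (omega U))) Ds Us"
    and "\<And>D n. D \<in> set Ds \<Longrightarrow> closed_at 0 D \<and> beq (App D (church n)) (church n)"
  using assms
proof (induct Us arbitrary: thesis)
  case Nil
  then show ?case by fastforce
next
  case (Cons U Us)
  obtain Ds where "list_all2 (\<lambda>D U. typing [] D (Arr (omega \<tau>) (omega U))) Ds Us"
    and "\<And>D n. D \<in> set Ds \<Longrightarrow> closed_at 0 D \<and> beq (App D (church n)) (church n)"
    using Cons.hyps Cons.prems(2) by (metis list.set_intros(2))
  moreover obtain D where D: "typing [] D (Arr (omega \<tau>) (omega U))"
    and "\<And>n. beq (App D (church n)) (church n)"
    using Cons.prems(2)[of U] unfolding coercible_def by auto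
  moreover have "closed_at 0 D" using typing_Nil_closed[OF D] .
  ultimately show ?case by (intro Cons.prems(1)[of "D # Ds"]) auto
qed

lemma strictly_representable_if_coercible:
  assumes E: "typing [] E (arrs (map omega Us) (omega \<sigma>))"
    and k: "length Us = k"
    and args: "\<And>U. U \<in> set Us \<Longrightarrow> coercible (\<lambda>_. True) \<tau> U"
    and result: "coercible P \<sigma> \<tau>"
    and E_church: "\<And>ns. length ns = k \<Longrightarrow> beq (apps E (map church ns)) (church (f ns)) \<and> P (f ns)"
  shows "strictly_representable k f"
proof -
  obtain Ds where Ds: "list_all2 (\<lambda>D U. typing [] D (Arr (omega \<tau>) (omega U))) Ds Us"
    and Ds_church: "\<And>D n. D \<in> set Ds \<Longrightarrow> closed_at 0 D \<and> beq (App D (church n)) (church n)"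
    using obtain_coercions[OF args] by blast
  have Ds_length: "length Ds = k" using Ds k by (simp add: list_all2_lengthD)
  have Ds_closed: "\<forall>D\<in>set Ds. closed_at 0 D" using Ds_church by blast
  obtain Q where Q: "typing [] Q (Arr (omega \<sigma>) (omega \<tau>))"
    and Q_church: "\<And>n. P n \<Longrightarrow> beq (App Q (church n)) (church n)"
    using result unfolding coercible_def by blast
  from typing_coerced[OF E Ds Q]
  have "typing [] (coerced Ds Q E) (arrs (replicate k (omega \<tau>)) (omega \<tau>))"
    by (simp only: Ds_length)
  moreover have "beq (apps (coerced Ds Q E) (map church ns)) (church (f ns))"
    if ns: "length ns = k" for ns
  proof -
    have "list_all2 beq (map2 (\<lambda>D n. App D (church n)) Ds ns) (map church ns)"
      using Ds_church Ds_length ns by (auto simp: list_all2_conv_all_nth)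
    then have E_coerced: "beq (apps E (map2 (\<lambda>D n. App D (church n)) Ds ns)) (church (f ns))"
      using E_church[OF ns] beq_apps_args beq_trans by blast
    have "beq (apps (coerced Ds Q E) (map church ns))
        (App Q (apps E (map2 (\<lambda>D n. App D (church n)) Ds ns)))"
      using Ds_closed typing_Nil_closed[OF Q] by (rule beq_apps_coerced) (simp add: ns Ds_length)
    also have "beq \<dots> (App Q (church (f ns)))" using E_coerced by (rule beq_AppR)
    also have "beq \<dots> (church (f ns))" using Q_church E_church[OF ns] by blast
    finally show ?thesis .
  qed
  ultimately show ?thesis unfolding strictly_representable_def by blast
qed

theorem theorem4:
  fixes k :: nat and f :: "nat list \<Rightarrow> nat"
  assumes "skewly_representable k f"
    and "finite (f ` {ns. length ns = k})"
  shows "strictly_representable k f"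
proof -
  obtain E \<tau>s \<sigma> where k: "length \<tau>s = k"
    and E: "typing [] E (arrs (map omega \<tau>s) (omega \<sigma>))"
    and E_church: "\<And>ns. length ns = k \<Longrightarrow> beq (apps E (map church ns)) (church (f ns))"
    using assms(1) unfolding skewly_representable_def by blast
  obtain M where bound: "\<And>ns. length ns = k \<Longrightarrow> f ns \<le> M"
    using assms(2) by (auto simp: finite_nat_set_iff_bounded_le)
  let ?subst = "subst_ty (proj_ty M)"
  have "typing [] E (arrs (map omega (map ?subst \<tau>s)) (omega (?subst \<sigma>)))"
    using typing_subst_ty[OF E, of "proj_ty M"] by (simp add: subst_ty_arrs subst_ty_omega comp_def)
  then show ?thesis
  proof (rule strictly_representable_if_coercible)
    show "length (map ?subst \<tau>s) = k" using k by simp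
    show "coercible (\<lambda>_. True) (tuple_ty (map ?subst \<tau>s)) U" if "U \<in> set (map ?subst \<tau>s)" for U
      using that by (rule coercible_tuple_ty)
    show "coercible (\<lambda>n. n \<le> M) (?subst \<sigma>) (tuple_ty (map ?subst \<tau>s))"
      by (rule coercible_trans[OF coercible_subst_ty_proj_ty coercible_proj_ty])
  qed (use E_church bound in blast)
qed

end
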